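(* Let $\alpha,\beta,\gamma$ be real numbers with $\gamma\neq\alpha$, and let $A,B,C,D,E,F,X,X'$ be nonzero real numbers satisfying $$(\gamma-\alpha)XX'=(\beta-\alpha)BE+(\gamma-\beta)AD.$$ Define the "old" vertex variables $$a=(\beta-\alpha)\frac{BF}{AX},\qquad b=(\gamma-\alpha)\frac{CX}{BD},\qquad c=(\gamma-\beta)\frac{DF}{EX},$$ and the "new" vertex variables $$d=(\gamma-\beta)\frac{AC}{BX'},\qquad e=(\gamma-\alpha)\frac{FX'}{AE},\qquad f=(\beta-\alpha)\frac{CE}{DX'}.$$ Then, provided $a+c\neq 0$, $$d=\frac{bc}{a+c},\qquad e=a+c,\qquad f=\frac{ab}{a+c},$$ i.e. the exchange $X\mapsto X'$ of the chamber variable (the enriched Yang–Baxter move) induces Lusztig's Yang–Baxter move $(a,b,c)\mapsto(bc/(a+c),\,a+c,\,ab/(a+c))$ on the vertex variables.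
   Context: This is the algebraic content of a Yang–Baxter (braid) move on three wires with parameters $\alpha,\beta,\gamma$ in a wiring diagram: $A,\dots,F$ are the variables of the six chambers surrounding the hexagon formed by the three crossings, $X$ is the variable of the inner chamber before the move and $X'$ after; each crossing of two wires with parameters $\alpha'$ (lower wire) and $\beta'$ (upper wire) carries the vertex variable $(\beta'-\alpha')$ times the product of the variables of two opposite surrounding chambers divided by the product of the other two. *)

theory Defs
  imports Complex_Main
begin

end

theory Submission
  imports Defs
begin

text \<open>The exchange relation for X' is exactly what makes e = a + c after clearing
  denominators. The other two claims need no relation at all: X and X' cancel in the
  products d e = b c and f e = a b, so dividing by e = a + c gives them.\<close>

lemma vertex_sum_eq:
  fixes \<alpha> \<beta> \<gamma> A B D E F X X' :: real
  assumes "A \<noteq> 0" "E \<noteq> 0" "X \<noteq> 0"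
    and "(\<gamma> - \<alpha>) * X * X' = (\<beta> - \<alpha>) * B * E + (\<gamma> - \<beta>) * A * D"
  shows "(\<beta> - \<alpha>) * (B * F) / (A * X) + (\<gamma> - \<beta>) * (D * F) / (E * X)
      = (\<gamma> - \<alpha>) * (F * X') / (A * E)"
proof -
  have "(\<beta> - \<alpha>) * (B * F) / (A * X) + (\<gamma> - \<beta>) * (D * F) / (E * X)
      = F * ((\<beta> - \<alpha>) * B * E + (\<gamma> - \<beta>) * A * D) / (A * E * X)"
    using assms(1-3) by (simp add: field_simps)
  also have "\<dots> = (\<gamma> - \<alpha>) * (F * X') / (A * E)"
    unfolding assms(4)[symmetric] using assms(1-3) by (simp add: field_simps)
  finally show ?thesis .
qed

lemma vertex_product_bc:
  fixes \<alpha> \<beta> \<gamma> A B C D E F X X' :: real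
  assumes "A \<noteq> 0" "B \<noteq> 0" "D \<noteq> 0" "E \<noteq> 0" "X \<noteq> 0" "X' \<noteq> 0"
  shows "(\<gamma> - \<beta>) * (A * C) / (B * X') * ((\<gamma> - \<alpha>) * (F * X') / (A * E))
      = (\<gamma> - \<alpha>) * (C * X) / (B * D) * ((\<gamma> - \<beta>) * (D * F) / (E * X))"
  using assms by (simp add: field_simps)

lemma vertex_product_ab:
  fixes \<alpha> \<beta> \<gamma> A B C D E F X X' :: real
  assumes "A \<noteq> 0" "B \<noteq> 0" "D \<noteq> 0" "E \<noteq> 0" "X \<noteq> 0" "X' \<noteq> 0"
  shows "(\<beta> - \<alpha>) * (C * E) / (D * X') * ((\<gamma> - \<alpha>) * (F * X') / (A * E))
      = (\<beta> - \<alpha>) * (B * F) / (A * X) * ((\<gamma> - \<alpha>) * (C * X) / (B * D))"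
  using assms by (simp add: field_simps)

theorem lemma3p1:
  fixes \<alpha> \<beta> \<gamma> A B C D E F X X' a b c d e f :: real
  assumes "\<gamma> \<noteq> \<alpha>"
    and "A \<noteq> 0" "B \<noteq> 0" "C \<noteq> 0" "D \<noteq> 0" "E \<noteq> 0" "F \<noteq> 0" "X \<noteq> 0" "X' \<noteq> 0"
    and rel: "(\<gamma> - \<alpha>) * X * X' = (\<beta> - \<alpha>) * B * E + (\<gamma> - \<beta>) * A * D"
    and a_def: "a = (\<beta> - \<alpha>) * (B * F) / (A * X)"
    and b_def: "b = (\<gamma> - \<alpha>) * (C * X) / (B * D)"
    and c_def: "c = (\<gamma> - \<beta>) * (D * F) / (E * X)"
    and d_def: "d = (\<gamma> - \<beta>) * (A * C) / (B * X')"
    and e_def: "e = (\<gamma> - \<alpha>) * (F * X') / (A * E)"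
    and f_def: "f = (\<beta> - \<alpha>) * (C * E) / (D * X')"
    and "a + c \<noteq> 0"
  shows "d = b * c / (a + c) \<and> e = a + c \<and> f = a * b / (a + c)"
proof -
  have e: "e = a + c"
    unfolding a_def c_def e_def using vertex_sum_eq[OF \<open>A \<noteq> 0\<close> \<open>E \<noteq> 0\<close> \<open>X \<noteq> 0\<close> rel]
    by simp
  have "d * e = b * c"
    unfolding b_def c_def d_def e_def using vertex_product_bc[OF assms(2,3,5,6,8,9)] .
  moreover have "f * e = a * b"
    unfolding a_def b_def e_def f_def using vertex_product_ab[OF assms(2,3,5,6,8,9)] .
  ultimately show ?thesis
    using e \<open>a + c \<noteq> 0\<close> by (simp add: eq_divide_eq)
qed

end
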